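(* Let $\mathbf{W}_0,\mathbf{W}^\star\in\mathbb{R}^{m\times n}$ with $\mathbf{W}^\star\neq\mathbf{W}_0$, let $r\ge1$, and let $L(\mathbf{W})=\frac12\|\mathbf{W}-\mathbf{W}^\star\|_F^2$ (which satisfies the PL inequality on $\mathbb{R}^{m\times n}$ with $\beta=1$). Then $F_{\mathrm{LoRA}}(\mathbf{A},\mathbf{B})=\frac12\|\mathbf{W}_0+\mathbf{A}\mathbf{B}-\mathbf{W}^\star\|_F^2$ does not satisfy the PL inequality on $\mathbb{R}^{m\times r}\times\mathbb{R}^{r\times n}$, i.e. there is no $\beta>0$ with $\frac12\|\nabla F_{\mathrm{LoRA}}(\mathbf{A},\mathbf{B})\|_F^2\ge\beta(F_{\mathrm{LoRA}}(\mathbf{A},\mathbf{B})-F^\star)$ for all $(\mathbf{A},\mathbf{B})$, where $F^\star=\inf F_{\mathrm{LoRA}}$. *)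

theory Defs
  imports "HOL-Analysis.Analysis"
begin

definition PL_ineq :: "('a::real_inner \<Rightarrow> real) \<Rightarrow> real \<Rightarrow> bool" where
  "PL_ineq f \<beta> \<longleftrightarrow>
     (\<forall>x D. (GDERIV f x :> D) \<longrightarrow> (1/2) * (norm D)^2 \<ge> \<beta> * (f x - (INF y. f y)))"

text \<open>LoRA objective; the norm on real^'n^'m is the Frobenius norm.\<close>
definition F_LoRA :: "real^'n^'m \<Rightarrow> real^'n^'m \<Rightarrow> ((real^'r^'m) \<times> (real^'n^'r)) \<Rightarrow> real" where
  "F_LoRA W0 Wstar AB = (1/2) * (norm (W0 + fst AB ** snd AB - Wstar))^2"

end

theory Submission imports Defs begin

text \<open>The LoRA objective depends on (A, B) only through the bilinear product A B, whose
  derivative vanishes at the origin; hence (0, 0) is a critical point. A PL inequality with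
  \<open>\<beta> > 0\<close> forces every critical point to be a global minimiser. The origin is not one:
  as W* differs from W0, some entry d of W* - W0 is nonzero, and the rank-one product
  A B = d e_i e_j^T lowers the objective by d^2/2.\<close>

lemma PL_ineq_critical_point_minimal:
  assumes "PL_ineq f \<beta>" and "\<beta> > 0" and "bdd_below (range f)" and "GDERIV f x :> 0"
  shows "f x \<le> f y"
proof -
  have "\<beta> * (f x - (INF y. f y)) \<le> 0"
    using assms(1,4) unfolding PL_ineq_def by fastforce
  then have "f x \<le> (INF y. f y)"
    using \<open>\<beta> > 0\<close> by (simp add: mult_le_0_iff)
  also have "\<dots> \<le> f y"
    using assms(3) by (rule cINF_lower) simp
  finally show ?thesis .
qed

lemma bounded_bilinear_matrix_matrix_mult:
  "bounded_bilinear ((**) :: real^'r^'m \<Rightarrow> real^'n^'r \<Rightarrow> real^'n^'m)"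
proof -
  have "bilinear ((**) :: real^'r^'m \<Rightarrow> real^'n^'r \<Rightarrow> real^'n^'m)"
    unfolding bilinear_def linear_iff
    by (auto simp: vec_eq_iff matrix_matrix_mult_def sum.distrib algebra_simps sum_distrib_left)
  then show ?thesis
    by (rule bilinear_conv_bounded_bilinear[THEN iffD1])
qed

lemma (in bounded_bilinear) has_derivative_origin:
  "((\<lambda>x. prod (fst x) (snd x)) has_derivative (\<lambda>_. 0)) (at 0)"
  using FDERIV[OF has_derivative_fst[OF has_derivative_ident]
      has_derivative_snd[OF has_derivative_ident], of 0 UNIV]
  by (simp add: zero_left zero_right)

lemma F_LoRA_gderiv_origin:
  "GDERIV (F_LoRA W0 Wstar :: (real^'r^'m) \<times> (real^'n^'r) \<Rightarrow> real) (0, 0) :> 0"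
proof -
  have "F_LoRA W0 Wstar = (\<lambda>x :: (real^'r^'m) \<times> (real^'n^'r).
      (1/2) * inner (W0 + fst x ** snd x - Wstar) (W0 + fst x ** snd x - Wstar))"
    by (auto simp: F_LoRA_def fun_eq_iff power2_norm_eq_inner)
  then show ?thesis
    unfolding gderiv_def zero_prod_def[symmetric]
    by (auto intro!: derivative_eq_intros
        bounded_bilinear.has_derivative_origin[OF bounded_bilinear_matrix_matrix_mult])
qed

lemma axis_matrix_matrix_mult:
  "(axis i (axis k a) :: real^'r^'m) ** (axis k (axis j b) :: real^'n^'r) = axis i (axis j (a * b))"
  by (simp add: vec_eq_iff matrix_matrix_mult_def axis_def if_distrib[of "\<lambda>x. x * _"]
      sum.delta cong: if_cong)

lemma F_LoRA_origin_not_minimal: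
  fixes W0 Wstar :: "real^'n^'m"
  assumes "Wstar \<noteq> W0"
  shows "\<exists>AB. (F_LoRA W0 Wstar :: (real^'r^'m) \<times> (real^'n^'r) \<Rightarrow> real) AB < F_LoRA W0 Wstar (0, 0)"
proof -
  define D where "D = Wstar - W0"
  obtain i j where "D $ i $ j \<noteq> 0"
    using assms by (metis D_def eq_iff_diff_eq_0 vec_eq_iff zero_index)
  define d where "d = D $ i $ j"
  fix k :: 'r
  define A :: "real^'r^'m" where "A = axis i (axis k 1)"
  define B :: "real^'n^'r" where "B = axis k (axis j d)"
  define E :: "real^'n^'m" where "E = axis i (axis j d)"
  have "W0 + A ** B - Wstar = E - D"
    by (simp add: A_def B_def D_def E_def axis_matrix_matrix_mult)
  moreover have "inner D E = d\<^sup>2" and "inner E E = d\<^sup>2"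
    by (simp_all add: E_def inner_axis inner_axis_axis d_def power2_eq_square)
  ultimately have "(norm (W0 + A ** B - Wstar))\<^sup>2 = (norm D)\<^sup>2 - d\<^sup>2"
    unfolding power2_norm_eq_inner by (simp add: inner_diff_left inner_diff_right inner_commute)
  moreover have "(norm (W0 + (0 :: real^'r^'m) ** (0 :: real^'n^'r) - Wstar))\<^sup>2 = (norm D)\<^sup>2"
    by (simp add: D_def norm_minus_commute
        bounded_bilinear.zero_left[OF bounded_bilinear_matrix_matrix_mult])
  moreover have "d\<^sup>2 > 0"
    using \<open>D $ i $ j \<noteq> 0\<close> by (simp add: d_def)
  ultimately show ?thesis
    unfolding F_LoRA_def by (intro exI[of _ "(A, B)"]) simp
qed

theorem proposition3:
  fixes W0 Wstar :: "real^'n^'m"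
  assumes "Wstar \<noteq> W0"
  shows "\<not> (\<exists>\<beta>>0. PL_ineq (F_LoRA W0 Wstar :: (real^'r^'m) \<times> (real^'n^'r) \<Rightarrow> real) \<beta>)"
proof
  let ?F = "F_LoRA W0 Wstar :: (real^'r^'m) \<times> (real^'n^'r) \<Rightarrow> real"
  assume "\<exists>\<beta>>0. PL_ineq ?F \<beta>"
  then obtain \<beta> where "\<beta> > 0" and "PL_ineq ?F \<beta>"
    by blast
  moreover have "bdd_below (range ?F)"
    by (rule bdd_belowI[of _ 0]) (auto simp: F_LoRA_def)
  ultimately have "?F (0, 0) \<le> ?F AB" for AB
    using PL_ineq_critical_point_minimal F_LoRA_gderiv_origin by blast
  then show False
    using F_LoRA_origin_not_minimal[OF assms] by (meson not_less)
qed

end
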